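(* Let $Z=(Z_1,\dots,Z_n)^\top$ be generated by the structural equations $Z_i = f_i(Z_{pa(i)}) + \mathcal{E}_i$, $i\in[n]$, with respect to a directed acyclic graph $\mathcal{G}$ on $[n]$, where each $f_i$ is twice continuously differentiable and directionally non-linear, and $\mathcal{E}_1,\dots,\mathcal{E}_n$ are mutually independent with $\mathcal{E}_i\sim\mathcal{N}(0,\sigma_i^2)$. Let $J_Z(z)=\nabla_z^2\log p(z)$ be the Jacobian of the score of $Z$, let $\beta\in\mathbb{R}^{n\times n}$, and set $J_{\hat Z}:=\beta^\top J_Z(Z)\,\beta$. Then for each $i\in[n]$, $\operatorname{Var}\big([J_{\hat Z}]_{ii}\big)=0$ if and only if the $i$-th column of $\beta$ has zero entries in every row corresponding to a non-leaf node of $\mathcal{G}$ (i.e. $\beta_{ji}=0$ for all non-leaf $j$).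
   Context: $p$ denotes the density of $Z$ and $pa(i)$ the parents of node $i$ in $\mathcal{G}$. A function $f_i:\mathbb{R}^{|pa(i)|}\to\mathbb{R}$ is directionally non-linear if there is no $\beta'\in\mathbb{R}^{|pa(i)|}$ with $\|\beta'\|_2=1$ such that $\partial^2_{\beta',\beta'} f_i(z)=0$ for all $z$. A leaf node is a node with no descendants in $\mathcal{G}$. In the paper's setting $X=HZ$ with $H\in\mathbb{R}^{d\times n}$ of full column rank, $\hat Z=\hat H^\dagger X$ for an estimate $\hat H\in\mathbb{R}^{d\times n}$, $\beta=H^\dagger\hat H$, and $J_{\hat Z}=\hat H^\top J_X\hat H=\beta^\top J_Z\beta$; the variance is taken over the randomness of $Z$. *)

theory Defs
  imports "HOL-Probability.Probability"
begin

definition dir_deriv :: "(real^'n \<Rightarrow> real) \<Rightarrow> real^'n \<Rightarrow> real^'n \<Rightarrow> real" where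
  "dir_deriv f v z = frechet_derivative f (at z) v"

definition dir_deriv2 :: "(real^'n \<Rightarrow> real) \<Rightarrow> real^'n \<Rightarrow> real^'n \<Rightarrow> real^'n \<Rightarrow> real" where
  "dir_deriv2 f v w z = frechet_derivative (\<lambda>y. dir_deriv f v y) (at z) w"

definition C2 :: "(real^'n \<Rightarrow> real) \<Rightarrow> bool" where
  "C2 f \<longleftrightarrow> (\<forall>z. f differentiable (at z))
     \<and> (\<forall>v z. (\<lambda>y. dir_deriv f v y) differentiable (at z))
     \<and> (\<forall>v w. continuous_on UNIV (dir_deriv2 f v w))"

definition hessian :: "(real^'n \<Rightarrow> real) \<Rightarrow> real^'n \<Rightarrow> real^'n^'n" where
  "hessian f z = (\<chi> j k. dir_deriv2 f (axis k 1) (axis j 1) z)"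

definition edges :: "('n \<Rightarrow> 'n set) \<Rightarrow> ('n \<times> 'n) set" where
  "edges pa = {(j, i). j \<in> pa i}"

definition is_dag :: "('n \<Rightarrow> 'n set) \<Rightarrow> bool" where
  "is_dag pa \<longleftrightarrow> acyclic (edges pa)"

definition leaf :: "('n \<Rightarrow> 'n set) \<Rightarrow> 'n \<Rightarrow> bool" where
  "leaf pa i \<longleftrightarrow> {k. (i, k) \<in> (edges pa)\<^sup>+} = {}"

definition depends_only_on :: "(real^'n \<Rightarrow> real) \<Rightarrow> 'n set \<Rightarrow> bool" where
  "depends_only_on f S \<longleftrightarrow> (\<forall>z z'. (\<forall>j\<in>S. z $ j = z' $ j) \<longrightarrow> f z = f z')"

definition dir_nonlinear :: "(real^'n \<Rightarrow> real) \<Rightarrow> 'n set \<Rightarrow> bool" where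
  "dir_nonlinear f S \<longleftrightarrow>
     \<not> (\<exists>b::real^'n. norm b = 1 \<and> (\<forall>j. j \<notin> S \<longrightarrow> b $ j = 0) \<and> (\<forall>z. dir_deriv2 f b b z = 0))"

definition zero_variance :: "'a measure \<Rightarrow> ('a \<Rightarrow> real) \<Rightarrow> bool" where
  "zero_variance M X \<longleftrightarrow> integrable M (\<lambda>x. (X x)\<^sup>2) \<and> prob_space.variance M X = 0"

end

theory Submission
  imports Defs
begin

(*
  Write b for the i-th column of beta, so that the (i,i) entry of beta^T J_Z beta is the second
  directional derivative of log p along b.  The residual map z |-> (z_k - f_k(z))_k is injective and
  preserves Lebesgue measure, being a composition of shears along a topological order of the DAG.
  Hence the density of Z is the product of the Gaussian noise densities at the residuals, and

    d^2_bb log p(z) = - sum_k ((b_k - d_b f_k(z))^2 - (z_k - f_k(z)) d^2_bb f_k(z)) / sigma_k^2.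

  If b vanishes on every parent, the k-th summand is the constant b_k^2 / sigma_k^2.  Otherwise pick
  a node k that has a parent j with b_j ~= 0 but no child with such a parent.  Moving z_k leaves all
  summands but the k-th unchanged and shifts the k-th residual, so the curvature changes at rate
  d^2_bb f_k / sigma_k^2, which is not identically zero because f_k is directionally non-linear.
  Finally, Z has an everywhere positive continuous density, so a continuous function of Z has zero
  variance exactly when it is constant.
*)

section \<open>Directional derivatives\<close>

lemma frechet_derivative_shift_invariant:
  fixes g :: "'a::real_normed_vector \<Rightarrow> 'b::real_normed_vector"
  assumes "\<And>y. g (y + u) = g y" and "g differentiable (at z)"
  shows "frechet_derivative g (at (z + u)) = frechet_derivative g (at z)"
proof -
  have "((\<lambda>y. y - u) has_derivative (\<lambda>h. h)) (at (z + u))"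
    by (auto intro!: derivative_eq_intros)
  then have "(g \<circ> (\<lambda>y. y - u) has_derivative frechet_derivative g (at z) \<circ> (\<lambda>h. h)) (at (z + u))"
    by (rule diff_chain_at) (simp add: assms(2) frechet_derivative_works[symmetric])
  moreover have "g \<circ> (\<lambda>y. y - u) = g"
    using assms(1) by (metis (no_types, lifting) comp_apply diff_add_cancel ext)
  ultimately have "(g has_derivative frechet_derivative g (at z)) (at (z + u))"
    by (simp add: comp_def)
  then show ?thesis
    by (metis frechet_derivative_at)
qed

lemma frechet_derivative_invariant_direction:
  fixes g :: "'a::real_normed_vector \<Rightarrow> 'b::real_normed_vector"
  assumes "\<And>y t. g (y + t *\<^sub>R u) = g y" and "g differentiable (at z)"
  shows "frechet_derivative g (at z) u = 0"
proof -
  let ?D = "frechet_derivative g (at z)"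
  have "((\<lambda>t. z + t *\<^sub>R u) has_derivative (\<lambda>t. t *\<^sub>R u)) (at 0)"
    by (auto intro!: derivative_eq_intros)
  then have "(g \<circ> (\<lambda>t. z + t *\<^sub>R u) has_derivative ?D \<circ> (\<lambda>t. t *\<^sub>R u)) (at 0)"
    by (rule diff_chain_at) (simp add: assms(2) frechet_derivative_works[symmetric])
  moreover have "g \<circ> (\<lambda>t. z + t *\<^sub>R u) = (\<lambda>t. g z)"
    using assms(1) by (auto simp: comp_def)
  ultimately have "((\<lambda>t. g z) has_derivative ?D \<circ> (\<lambda>t. t *\<^sub>R u)) (at 0)"
    by simp
  then have "?D \<circ> (\<lambda>t. t *\<^sub>R u) = (\<lambda>t. 0)"
    using has_derivative_const has_derivative_unique by blast
  then show ?thesis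
    by (metis comp_apply scaleR_one)
qed

lemma has_derivative_vec_nth [derivative_intros]:
  "((\<lambda>x. x $ k) has_derivative (\<lambda>v. v $ k)) F"
  by (rule bounded_linear_imp_has_derivative) (rule bounded_linear_vec_nth)

lemma linear_dir_deriv:
  "f differentiable (at z) \<Longrightarrow> linear (\<lambda>v. dir_deriv f v z)"
  unfolding dir_deriv_def using frechet_derivative_works has_derivative_linear by blast

lemma linear_dir_deriv2_right:
  "(\<lambda>y. dir_deriv f v y) differentiable (at z) \<Longrightarrow> linear (\<lambda>w. dir_deriv2 f v w z)"
  unfolding dir_deriv2_def using frechet_derivative_works has_derivative_linear by blast

lemma linear_dir_deriv2_left:
  fixes f :: "real^'n \<Rightarrow> real"
  assumes "\<And>y. f differentiable (at y)" and "\<And>v. (\<lambda>y. dir_deriv f v y) differentiable (at z)"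
  shows "linear (\<lambda>v. dir_deriv2 f v w z)"
proof
  fix v1 v2 :: "real^'n" and c :: real
  have "(\<lambda>y. dir_deriv f (v1 + v2) y) = (\<lambda>y. dir_deriv f v1 y + dir_deriv f v2 y)"
    using linear_add[OF linear_dir_deriv[OF assms(1)]] by simp
  moreover have "((\<lambda>y. dir_deriv f v1 y + dir_deriv f v2 y) has_derivative
      (\<lambda>w. dir_deriv2 f v1 w z + dir_deriv2 f v2 w z)) (at z)"
    unfolding dir_deriv2_def using assms(2) by (intro has_derivative_add) (simp_all add: frechet_derivative_works)
  ultimately show "dir_deriv2 f (v1 + v2) w z = dir_deriv2 f v1 w z + dir_deriv2 f v2 w z"
    unfolding dir_deriv2_def[of f "v1 + v2"] by (simp add: frechet_derivative_at[symmetric])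
  have "(\<lambda>y. dir_deriv f (c *\<^sub>R v1) y) = (\<lambda>y. c * dir_deriv f v1 y)"
    using linear_cmul[OF linear_dir_deriv[OF assms(1)]] by simp
  moreover have "((\<lambda>y. c * dir_deriv f v1 y) has_derivative (\<lambda>w. c * dir_deriv2 f v1 w z)) (at z)"
    unfolding dir_deriv2_def using assms(2) by (intro has_derivative_mult_right) (simp add: frechet_derivative_works)
  ultimately show "dir_deriv2 f (c *\<^sub>R v1) w z = c *\<^sub>R dir_deriv2 f v1 w z"
    unfolding dir_deriv2_def[of f "c *\<^sub>R v1"] by (simp add: frechet_derivative_at[symmetric])
qed

lemma hessian_congruence_diag:
  fixes g :: "real^'n \<Rightarrow> real"
  assumes "\<And>y. g differentiable (at y)" and "\<And>v. (\<lambda>y. dir_deriv g v y) differentiable (at z)"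
  shows "(transpose \<beta> ** hessian g z ** \<beta>) $ i $ i = dir_deriv2 g (column i \<beta>) (column i \<beta>) z"
proof -
  let ?b = "column i \<beta>"
  note left = linear_dir_deriv2_left[OF assms] and right = linear_dir_deriv2_right[OF assms(2)]
  have basis: "?b = (\<Sum>j\<in>UNIV. ?b $ j *\<^sub>R axis j 1)"
    using basis_expansion[of ?b] by (simp add: scalar_mult_eq_scaleR)
  have "dir_deriv2 g ?b ?b z = (\<Sum>j\<in>UNIV. ?b $ j * dir_deriv2 g (axis j 1) ?b z)"
    by (subst (1) basis) (simp add: linear_sum[OF left] linear_cmul[OF left])
  also have "\<dots> = (\<Sum>j\<in>UNIV. \<Sum>l\<in>UNIV. ?b $ j * ?b $ l * dir_deriv2 g (axis j 1) (axis l 1) z)"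
    by (subst (2) basis) (simp add: linear_sum[OF right] linear_cmul[OF right] sum_distrib_left mult.assoc)
  also have "\<dots> = (transpose \<beta> ** hessian g z ** \<beta>) $ i $ i"
    by (simp add: matrix_matrix_mult_def transpose_def hessian_def column_def sum_distrib_left sum_distrib_right mult_ac)
  finally show ?thesis ..
qed

lemma C2_imp_differentiable:
  fixes g :: "real^'n \<Rightarrow> real"
  assumes "C2 g"
  shows "g differentiable (at y)" and "(\<lambda>y. dir_deriv g v y) differentiable (at y)"
  using assms unfolding C2_def by blast+

lemma C2_imp_continuous:
  fixes g :: "real^'n \<Rightarrow> real"
  assumes "C2 g"
  shows "continuous_on UNIV g" and "continuous_on UNIV (\<lambda>y. dir_deriv g v y)"
    and "continuous_on UNIV (dir_deriv2 g v w)"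
  using assms by (auto intro!: differentiable_imp_continuous_on simp: differentiable_on_def C2_def)

lemma depends_only_on_add:
  assumes "depends_only_on g S" and "\<And>j. j \<in> S \<Longrightarrow> u $ j = 0"
  shows "g (y + u) = g y"
  using assms unfolding depends_only_on_def by auto

context
  fixes g :: "real^'n \<Rightarrow> real" and S :: "'n set"
  assumes dep: "depends_only_on g S" and smooth: "C2 g"
begin

private lemmas g_differentiable = C2_imp_differentiable[OF smooth]

lemma dir_deriv_add_invariant:
  assumes "\<And>j. j \<in> S \<Longrightarrow> u $ j = 0"
  shows "dir_deriv g v (y + u) = dir_deriv g v y"
  unfolding dir_deriv_def
  by (subst frechet_derivative_shift_invariant) (auto intro: depends_only_on_add[OF dep] assms g_differentiable)

lemma dir_deriv2_add_invariant:
  assumes "\<And>j. j \<in> S \<Longrightarrow> u $ j = 0"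
  shows "dir_deriv2 g v w (y + u) = dir_deriv2 g v w y"
  unfolding dir_deriv2_def
  by (subst frechet_derivative_shift_invariant) (auto intro: dir_deriv_add_invariant assms g_differentiable)

lemma dir_deriv_eq_0:
  assumes "\<And>j. j \<in> S \<Longrightarrow> u $ j = 0"
  shows "dir_deriv g u y = 0"
proof -
  have "g (x + t *\<^sub>R u) = g x" for x t
    by (rule depends_only_on_add[OF dep]) (simp add: assms)
  then show ?thesis
    unfolding dir_deriv_def by (intro frechet_derivative_invariant_direction g_differentiable)
qed

lemma dir_deriv2_eq_0_left:
  assumes "\<And>j. j \<in> S \<Longrightarrow> u $ j = 0"
  shows "dir_deriv2 g u w y = 0"
proof -
  have "(\<lambda>y. dir_deriv g u y) = (\<lambda>y. 0)"
    using dir_deriv_eq_0[OF assms] by simp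
  then show ?thesis
    unfolding dir_deriv2_def by (simp add: frechet_derivative_const)
qed

lemma dir_deriv2_eq_0_right:
  assumes "\<And>j. j \<in> S \<Longrightarrow> u $ j = 0"
  shows "dir_deriv2 g v u y = 0"
proof -
  have "dir_deriv g v (x + t *\<^sub>R u) = dir_deriv g v x" for x t
    by (rule dir_deriv_add_invariant) (simp add: assms)
  then show ?thesis
    unfolding dir_deriv2_def by (intro frechet_derivative_invariant_direction g_differentiable)
qed

lemma dir_deriv2_restrict:
  "dir_deriv2 g b b z = dir_deriv2 g (\<chi> j. if j \<in> S then b $ j else 0) (\<chi> j. if j \<in> S then b $ j else 0) z"
proof -
  define b' where "b' = (\<chi> j. if j \<in> S then b $ j else 0)"
  define u where "u = b - b'"
  have u: "\<And>j. j \<in> S \<Longrightarrow> u $ j = 0" by (simp add: u_def b'_def)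
  note left = linear_dir_deriv2_left[OF g_differentiable]
    and right = linear_dir_deriv2_right[OF g_differentiable(2)]
  have "dir_deriv2 g (b' + u) (b' + u) z = dir_deriv2 g b' b' z"
    by (simp add: linear_add[OF left] linear_add[OF right] dir_deriv2_eq_0_left[OF u] dir_deriv2_eq_0_right[OF u])
  then show ?thesis
    by (simp add: u_def b'_def)
qed

lemma dir_nonlinear_imp_dir_deriv2_nonzero:
  assumes "dir_nonlinear g S" and "j \<in> S" and "b $ j \<noteq> 0"
  shows "\<exists>z. dir_deriv2 g b b z \<noteq> 0"
proof (rule ccontr)
  assume flat: "\<not> (\<exists>z. dir_deriv2 g b b z \<noteq> 0)"
  define b' where "b' = (\<chi> j. if j \<in> S then b $ j else 0)"
  define c where "c = b' /\<^sub>R norm b'"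
  have "b' \<noteq> 0"
    using assms(2,3) by (auto simp: b'_def vec_eq_iff)
  then have "norm c = 1"
    by (simp add: c_def)
  moreover have "\<forall>j. j \<notin> S \<longrightarrow> c $ j = 0"
    by (simp add: c_def b'_def)
  moreover have "\<forall>z. dir_deriv2 g c c z = 0"
    using flat dir_deriv2_restrict[of b]
    by (simp add: c_def b'_def linear_cmul[OF linear_dir_deriv2_left[OF g_differentiable]]
        linear_cmul[OF linear_dir_deriv2_right[OF g_differentiable(2)]])
  ultimately show False
    using assms(1) unfolding dir_nonlinear_def by blast
qed

end

section \<open>The log-density of a Gaussian structural equation model\<close>

lemma is_dag_irreflexive: "is_dag pa \<Longrightarrow> k \<notin> pa k"
  unfolding is_dag_def acyclic_def edges_def by auto

lemma not_leaf_iff_parent: "\<not> leaf pa j \<longleftrightarrow> (\<exists>m. j \<in> pa m)"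
  unfolding leaf_def edges_def by (auto dest: tranclD)

lemma is_dag_obtain_sink:
  fixes pa :: "'n::finite \<Rightarrow> 'n set"
  assumes "is_dag pa" and "k0 \<in> Q"
  obtains k where "k \<in> Q" and "\<And>m. k \<in> pa m \<Longrightarrow> m \<notin> Q"
proof -
  have "wf ((edges pa)\<inverse>)"
    using assms(1) unfolding is_dag_def by (intro finite_acyclic_wf_converse) simp_all
  then obtain k where "k \<in> Q" "\<And>m. (m, k) \<in> (edges pa)\<inverse> \<Longrightarrow> m \<notin> Q"
    using assms(2) unfolding wf_eq_minimal by metis
  then show ?thesis
    by (intro that) (auto simp: edges_def)
qed

definition gaussian_sem_log_density :: "('n::finite \<Rightarrow> real^'n \<Rightarrow> real) \<Rightarrow> ('n \<Rightarrow> real) \<Rightarrow> real^'n \<Rightarrow> real" where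
  "gaussian_sem_log_density f \<sigma> z = (\<Sum>k\<in>UNIV. ln (normal_density 0 (\<sigma> k) (z $ k - f k z)))"

definition sem_curvature_term :: "('n \<Rightarrow> real^'n \<Rightarrow> real) \<Rightarrow> ('n \<Rightarrow> real) \<Rightarrow> real^'n \<Rightarrow> 'n \<Rightarrow> real^'n \<Rightarrow> real" where
  "sem_curvature_term f \<sigma> b k z =
     ((b $ k - dir_deriv (f k) b z)\<^sup>2 - (z $ k - f k z) * dir_deriv2 (f k) b b z) / (\<sigma> k)\<^sup>2"

lemma ln_normal_density:
  assumes "\<sigma> > 0"
  shows "ln (normal_density 0 \<sigma> x) = ln (1 / sqrt (2 * pi * \<sigma>\<^sup>2)) - x\<^sup>2 / (2 * \<sigma>\<^sup>2)"
  using assms unfolding normal_density_def by (subst ln_mult) simp_all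

lemma gaussian_sem_log_density_eq:
  assumes "\<And>k. \<sigma> k > 0"
  shows "gaussian_sem_log_density f \<sigma> =
     (\<lambda>z. \<Sum>k\<in>UNIV. ln (1 / sqrt (2 * pi * (\<sigma> k)\<^sup>2)) - (z $ k - f k z)\<^sup>2 / (2 * (\<sigma> k)\<^sup>2))"
  unfolding gaussian_sem_log_density_def by (simp add: ln_normal_density assms)

context
  fixes f :: "'n::finite \<Rightarrow> real^'n \<Rightarrow> real" and \<sigma> :: "'n \<Rightarrow> real"
  assumes smooth: "\<And>k. C2 (f k)" and \<sigma>_pos: "\<And>k. \<sigma> k > 0"
begin

private lemmas f_differentiable = C2_imp_differentiable[OF smooth]

private lemma \<sigma>_nonzero: "2 * (\<sigma> k)\<^sup>2 \<noteq> 0" "(\<sigma> k)\<^sup>2 \<noteq> 0" "\<sigma> k \<noteq> 0"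
  using \<sigma>_pos[of k] by auto

lemma has_derivative_gaussian_sem_log_density:
  "(gaussian_sem_log_density f \<sigma> has_derivative
     (\<lambda>v. \<Sum>k\<in>UNIV. - ((y $ k - f k y) * (v $ k - dir_deriv (f k) v y)) / (\<sigma> k)\<^sup>2)) (at y)"
  unfolding gaussian_sem_log_density_eq[OF \<sigma>_pos]
  apply (rule has_derivative_eq_rhs)
   apply (rule derivative_eq_intros frechet_derivative_works[THEN iffD1] f_differentiable refl \<sigma>_nonzero)+
  apply (rule ext, rule sum.cong, simp)
  apply (simp add: dir_deriv_def field_simps \<sigma>_nonzero)
  done

lemma dir_deriv_gaussian_sem_log_density:
  "dir_deriv (gaussian_sem_log_density f \<sigma>) v y =
     (\<Sum>k\<in>UNIV. - ((y $ k - f k y) * (v $ k - dir_deriv (f k) v y)) / (\<sigma> k)\<^sup>2)"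
  unfolding dir_deriv_def frechet_derivative_at[OF has_derivative_gaussian_sem_log_density, symmetric] ..

lemma has_derivative_dir_deriv_gaussian_sem_log_density:
  "((\<lambda>y. dir_deriv (gaussian_sem_log_density f \<sigma>) v y) has_derivative
     (\<lambda>w. \<Sum>k\<in>UNIV. - ((w $ k - dir_deriv (f k) w z) * (v $ k - dir_deriv (f k) v z)
        - (z $ k - f k z) * dir_deriv2 (f k) v w z) / (\<sigma> k)\<^sup>2)) (at z)"
  unfolding dir_deriv_gaussian_sem_log_density
  apply (rule has_derivative_eq_rhs)
   apply (rule derivative_eq_intros frechet_derivative_works[THEN iffD1] f_differentiable refl \<sigma>_nonzero)+
  apply (rule ext, rule sum.cong, simp)
  apply (simp add: dir_deriv_def dir_deriv2_def)
  done

lemma gaussian_sem_log_density_differentiable: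
  "gaussian_sem_log_density f \<sigma> differentiable (at y)"
  "(\<lambda>y. dir_deriv (gaussian_sem_log_density f \<sigma>) v y) differentiable (at y)"
  by (rule differentiableI[OF has_derivative_gaussian_sem_log_density]
      differentiableI[OF has_derivative_dir_deriv_gaussian_sem_log_density])+

lemma dir_deriv2_gaussian_sem_log_density:
  "dir_deriv2 (gaussian_sem_log_density f \<sigma>) b b z = - (\<Sum>k\<in>UNIV. sem_curvature_term f \<sigma> b k z)"
  unfolding dir_deriv2_def frechet_derivative_at[OF has_derivative_dir_deriv_gaussian_sem_log_density, symmetric]
  by (simp add: sem_curvature_term_def dir_deriv2_def sum_negf[symmetric] power2_eq_square minus_divide_left)

lemma continuous_on_dir_deriv2_gaussian_sem_log_density:
  "continuous_on UNIV (dir_deriv2 (gaussian_sem_log_density f \<sigma>) b b)"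
proof -
  have "dir_deriv2 (gaussian_sem_log_density f \<sigma>) b b = (\<lambda>z. - (\<Sum>k\<in>UNIV. sem_curvature_term f \<sigma> b k z))"
    using dir_deriv2_gaussian_sem_log_density by blast
  then show ?thesis
    unfolding sem_curvature_term_def
    by (auto intro!: continuous_intros C2_imp_continuous[OF smooth] simp: \<sigma>_nonzero)
qed

end

context
  fixes f :: "'n::finite \<Rightarrow> real^'n \<Rightarrow> real" and pa :: "'n \<Rightarrow> 'n set" and \<sigma> :: "'n \<Rightarrow> real"
    and b :: "real^'n"
  assumes dep: "\<And>k. depends_only_on (f k) (pa k)"
    and smooth: "\<And>k. C2 (f k)"
    and dag: "is_dag pa"
    and \<sigma>_pos: "\<And>k. \<sigma> k > 0"
begin

lemma sem_curvature_term_const: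
  assumes "\<And>j. j \<in> pa m \<Longrightarrow> b $ j = 0"
  shows "sem_curvature_term f \<sigma> b m z = (b $ m)\<^sup>2 / (\<sigma> m)\<^sup>2"
  unfolding sem_curvature_term_def
  using dir_deriv_eq_0[OF dep smooth assms] dir_deriv2_eq_0_left[OF dep smooth assms] by simp

lemma sem_curvature_term_shift_other:
  assumes "m \<noteq> k" and "k \<notin> pa m"
  shows "sem_curvature_term f \<sigma> b m (z + t *\<^sub>R axis k 1) = sem_curvature_term f \<sigma> b m z"
proof -
  have shift: "\<And>j. j \<in> pa m \<Longrightarrow> (t *\<^sub>R axis k 1 :: real^'n) $ j = 0"
    using assms by (auto simp: axis_def)
  show ?thesis
    unfolding sem_curvature_term_def
    using dir_deriv_add_invariant[OF dep smooth shift] dir_deriv2_add_invariant[OF dep smooth shift]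
      depends_only_on_add[OF dep shift] assms(1)
    by (simp add: axis_def)
qed

lemma sem_curvature_term_shift_self:
  "sem_curvature_term f \<sigma> b k (z + t *\<^sub>R axis k 1) =
     sem_curvature_term f \<sigma> b k z - t * dir_deriv2 (f k) b b z / (\<sigma> k)\<^sup>2"
proof -
  have shift: "\<And>j. j \<in> pa k \<Longrightarrow> (t *\<^sub>R axis k 1 :: real^'n) $ j = 0"
    using is_dag_irreflexive[OF dag] by (auto simp: axis_def)
  show ?thesis
    unfolding sem_curvature_term_def
    using dir_deriv_add_invariant[OF dep smooth shift] dir_deriv2_add_invariant[OF dep smooth shift]
      depends_only_on_add[OF dep shift]
    by (simp add: axis_def diff_divide_distrib add_divide_distrib algebra_simps)
qed

lemma dir_deriv2_gaussian_sem_log_density_shift: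
  assumes "\<And>m j. k \<in> pa m \<Longrightarrow> j \<in> pa m \<Longrightarrow> b $ j = 0"
  shows "dir_deriv2 (gaussian_sem_log_density f \<sigma>) b b (z + t *\<^sub>R axis k 1) =
         dir_deriv2 (gaussian_sem_log_density f \<sigma>) b b z + t * dir_deriv2 (f k) b b z / (\<sigma> k)\<^sup>2"
proof -
  let ?\<tau> = "sem_curvature_term f \<sigma> b"
  \<comment> \<open>The terms of the children of k are constant; those of the other nodes do not see z k.\<close>
  have other: "?\<tau> m (z + t *\<^sub>R axis k 1) = ?\<tau> m z" if "m \<noteq> k" for m
    using that assms sem_curvature_term_const sem_curvature_term_shift_other by (cases "k \<in> pa m") auto
  have "(\<Sum>m\<in>UNIV. ?\<tau> m (z + t *\<^sub>R axis k 1)) =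
        ?\<tau> k (z + t *\<^sub>R axis k 1) + (\<Sum>m\<in>UNIV - {k}. ?\<tau> m (z + t *\<^sub>R axis k 1))"
    by (simp add: sum.remove)
  also have "\<dots> = ?\<tau> k z - t * dir_deriv2 (f k) b b z / (\<sigma> k)\<^sup>2 + (\<Sum>m\<in>UNIV - {k}. ?\<tau> m z)"
    using other sem_curvature_term_shift_self by simp
  also have "\<dots> = (\<Sum>m\<in>UNIV. ?\<tau> m z) - t * dir_deriv2 (f k) b b z / (\<sigma> k)\<^sup>2"
    by (simp add: sum_diff1)
  finally show ?thesis
    unfolding dir_deriv2_gaussian_sem_log_density[OF smooth \<sigma>_pos] by simp
qed

theorem gaussian_sem_log_density_constant_curvature_iff:
  assumes nonlinear: "\<And>k. dir_nonlinear (f k) (pa k)"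
  shows "(\<exists>c. \<forall>z. dir_deriv2 (gaussian_sem_log_density f \<sigma>) b b z = c) \<longleftrightarrow>
         (\<forall>j. \<not> leaf pa j \<longrightarrow> b $ j = 0)"
proof
  assume "\<exists>c. \<forall>z. dir_deriv2 (gaussian_sem_log_density f \<sigma>) b b z = c"
  then obtain c where const: "\<And>z. dir_deriv2 (gaussian_sem_log_density f \<sigma>) b b z = c"
    by blast
  show "\<forall>j. \<not> leaf pa j \<longrightarrow> b $ j = 0"
  proof (rule ccontr)
    assume "\<not> (\<forall>j. \<not> leaf pa j \<longrightarrow> b $ j = 0)"
    then obtain j m where "j \<in> pa m" "b $ j \<noteq> 0"
      unfolding not_leaf_iff_parent by blast
    define Q where "Q = {k. \<exists>j\<in>pa k. b $ j \<noteq> 0}"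
    have "m \<in> Q"
      using \<open>j \<in> pa m\<close> \<open>b $ j \<noteq> 0\<close> by (auto simp: Q_def)
    then obtain k where k: "k \<in> Q" and sink: "\<And>m. k \<in> pa m \<Longrightarrow> m \<notin> Q"
      using is_dag_obtain_sink[OF dag] by blast
    have "dir_deriv2 (f k) b b z = 0" for z
    proof -
      have "\<And>m j. k \<in> pa m \<Longrightarrow> j \<in> pa m \<Longrightarrow> b $ j = 0"
        using sink by (auto simp: Q_def)
      then have "c = c + dir_deriv2 (f k) b b z / (\<sigma> k)\<^sup>2"
        using dir_deriv2_gaussian_sem_log_density_shift[of k z 1] by (simp add: const)
      then show ?thesis
        using \<sigma>_pos[of k] by simp
    qed
    moreover obtain j0 where "j0 \<in> pa k" "b $ j0 \<noteq> 0"
      using k by (auto simp: Q_def)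
    ultimately show False
      using dir_nonlinear_imp_dir_deriv2_nonzero[OF dep smooth nonlinear] by blast
  qed
next
  assume "\<forall>j. \<not> leaf pa j \<longrightarrow> b $ j = 0"
  then have "\<And>m j. j \<in> pa m \<Longrightarrow> b $ j = 0"
    by (auto simp: not_leaf_iff_parent)
  then show "\<exists>c. \<forall>z. dir_deriv2 (gaussian_sem_log_density f \<sigma>) b b z = c"
    by (simp add: dir_deriv2_gaussian_sem_log_density[OF smooth \<sigma>_pos] sem_curvature_term_const)
qed

end
section \<open>Triangular maps preserve Lebesgue measure\<close>

lemma product_sigma_finite_lborel: "product_sigma_finite (\<lambda>_::'i. lborel :: real measure)"
  unfolding product_sigma_finite_def by (simp add: sigma_finite_lborel)

lemma Basis_real_vec: "(Basis :: (real^'n) set) = range (\<lambda>k. axis k 1)"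
  by (auto simp: Basis_vec_def)

lemma measurable_vec_lambda_PiM [measurable]:
  "(vec_lambda :: ('n::finite \<Rightarrow> real) \<Rightarrow> real^'n) \<in> borel_measurable (PiM UNIV (\<lambda>_. lborel))"
proof (subst borel_measurable_euclidean_space, intro ballI)
  fix i :: "real^'n"
  assume "i \<in> Basis"
  then obtain k where i: "i = axis k 1"
    by (auto simp: Basis_real_vec)
  have "(\<lambda>x::'n \<Rightarrow> real. x k) \<in> borel_measurable (PiM UNIV (\<lambda>_. lborel))"
    using measurable_component_singleton[of k UNIV "\<lambda>_. lborel"] by simp
  then show "(\<lambda>x. vec_lambda x \<bullet> i) \<in> borel_measurable (PiM UNIV (\<lambda>_. lborel))"
    by (simp add: i cart_eq_inner_axis[symmetric])
qed

lemma lborel_real_vec_eq_PiM: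
  "(lborel :: (real^'n::finite) measure) = distr (PiM UNIV (\<lambda>_. lborel)) borel vec_lambda"
proof (rule lborel_eqI)
  interpret product_sigma_finite "\<lambda>_::'n. lborel :: real measure"
    by (rule product_sigma_finite_lborel)
  fix l u :: "real^'n"
  assume "\<And>b. b \<in> Basis \<Longrightarrow> l \<bullet> b \<le> u \<bullet> b"
  then have le: "l $ k \<le> u $ k" for k
    by (simp add: Basis_real_vec cart_eq_inner_axis)
  have "vec_lambda -` box l u \<inter> space (PiM UNIV (\<lambda>_. lborel)) = PiE UNIV (\<lambda>k. {l$k<..<u$k})"
    by (auto simp: space_PiM mem_box_cart PiE_def extensional_def Pi_iff)
  then have "emeasure (distr (PiM UNIV (\<lambda>_. lborel)) borel vec_lambda) (box l u) =
      emeasure (PiM UNIV (\<lambda>_. lborel)) (PiE UNIV (\<lambda>k. {l$k<..<u$k}))"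
    by (subst emeasure_distr) auto
  also have "\<dots> = (\<Prod>k\<in>UNIV. ennreal (u$k - l$k))"
    using le by (subst emeasure_PiM) auto
  also have "\<dots> = ennreal (\<Prod>b\<in>Basis. (u - l) \<bullet> b)"
    using le by (simp add: prod_ennreal Basis_real_vec prod.reindex inj_on_def axis_eq_axis
        cart_eq_inner_axis[symmetric])
  finally show "emeasure (distr (PiM UNIV (\<lambda>_. lborel)) borel vec_lambda) (box l u) =
      (\<Prod>b\<in>Basis. (u - l) \<bullet> b)" .
qed simp

lemma nn_integral_lborel_real_vec:
  fixes g :: "real^'n::finite \<Rightarrow> ennreal"
  assumes [measurable]: "g \<in> borel_measurable borel"
  shows "(\<integral>\<^sup>+z. g z \<partial>lborel) = (\<integral>\<^sup>+x. g (vec_lambda x) \<partial>PiM UNIV (\<lambda>_. lborel))"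
  by (subst lborel_real_vec_eq_PiM) (simp add: nn_integral_distr)

lemma nn_integral_lborel_shear:
  fixes g :: "real^'n::finite \<Rightarrow> ennreal" and c :: "real^'n \<Rightarrow> real"
  assumes [measurable]: "g \<in> borel_measurable borel" "c \<in> borel_measurable borel"
    and c_invariant: "\<And>z t. c (z + t *\<^sub>R axis k 1) = c z"
  shows "(\<integral>\<^sup>+z. g (z - c z *\<^sub>R axis k 1) \<partial>lborel) = (\<integral>\<^sup>+z. g z \<partial>lborel)"
proof -
  \<comment> \<open>Fubini, integrating first over the k-th coordinate, along which the shear is a translation.\<close>
  interpret product_sigma_finite "\<lambda>_::'n. lborel :: real measure"
    by (rule product_sigma_finite_lborel)
  let ?I = "UNIV - {k}" and ?P = "\<lambda>I. PiM I (\<lambda>_. lborel :: real measure)"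
  have UNIV_eq: "insert k ?I = UNIV" by auto
  have upd: "vec_lambda (x(k := y)) = vec_lambda x + (y - x k) *\<^sub>R axis k 1" for x :: "'n \<Rightarrow> real" and y
    by (auto simp: vec_eq_iff axis_def)
  have sheared: "vec_lambda (x(k := y)) - c (vec_lambda (x(k := y))) *\<^sub>R axis k 1 =
      vec_lambda (x(k := y - c (vec_lambda x)))" for x :: "'n \<Rightarrow> real" and y
    unfolding upd c_invariant by (auto simp: vec_eq_iff axis_def)
  have translate: "(\<integral>\<^sup>+y. g (vec_lambda (x(k := y - a))) \<partial>lborel) = (\<integral>\<^sup>+y. g (vec_lambda (x(k := y))) \<partial>lborel)"
    for x :: "'n \<Rightarrow> real" and a
  proof -
    have [measurable]: "(\<lambda>y. g (vec_lambda (x(k := y)))) \<in> borel_measurable borel"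
      unfolding upd by measurable
    show ?thesis
      using nn_integral_real_affine[of "\<lambda>y. g (vec_lambda (x(k := y)))" 1 "- a"] by simp
  qed
  have [measurable]: "(\<lambda>x. g (vec_lambda x - c (vec_lambda x) *\<^sub>R axis k 1)) \<in> borel_measurable (?P (insert k ?I))"
    "(\<lambda>x. g (vec_lambda x)) \<in> borel_measurable (?P (insert k ?I))"
    unfolding UNIV_eq by measurable
  have "(\<integral>\<^sup>+z. g (z - c z *\<^sub>R axis k 1) \<partial>lborel) =
      (\<integral>\<^sup>+x. g (vec_lambda x - c (vec_lambda x) *\<^sub>R axis k 1) \<partial>?P (insert k ?I))"
    unfolding UNIV_eq by (rule nn_integral_lborel_real_vec) measurable
  also have "\<dots> = (\<integral>\<^sup>+x. \<integral>\<^sup>+y. g (vec_lambda (x(k := y)) - c (vec_lambda (x(k := y))) *\<^sub>R axis k 1) \<partial>lborel \<partial>?P ?I)"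
    by (rule product_nn_integral_insert) auto
  also have "\<dots> = (\<integral>\<^sup>+x. \<integral>\<^sup>+y. g (vec_lambda (x(k := y))) \<partial>lborel \<partial>?P ?I)"
    unfolding sheared translate ..
  also have "\<dots> = (\<integral>\<^sup>+x. g (vec_lambda x) \<partial>?P (insert k ?I))"
    by (rule product_nn_integral_insert[symmetric]) auto
  also have "\<dots> = (\<integral>\<^sup>+z. g z \<partial>lborel)"
    unfolding UNIV_eq by (rule nn_integral_lborel_real_vec[symmetric]) measurable
  finally show ?thesis .
qed

lemma distr_lborel_shear:
  fixes c :: "real^'n::finite \<Rightarrow> real"
  assumes [measurable]: "c \<in> borel_measurable borel"
    and "\<And>z t. c (z + t *\<^sub>R axis k 1) = c z"
  shows "distr lborel borel (\<lambda>z. z - c z *\<^sub>R axis k 1) = lborel"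
proof (rule measure_eqI)
  fix X
  assume "X \<in> sets (distr lborel borel (\<lambda>z. z - c z *\<^sub>R axis k 1))"
  then have [measurable]: "X \<in> sets borel"
    by simp
  have "emeasure (distr lborel borel (\<lambda>z. z - c z *\<^sub>R axis k 1)) X =
      (\<integral>\<^sup>+z. indicator X z \<partial>distr lborel borel (\<lambda>z. z - c z *\<^sub>R axis k 1))"
    by (subst nn_integral_indicator) auto
  also have "\<dots> = (\<integral>\<^sup>+z. indicator X (z - c z *\<^sub>R axis k 1) \<partial>lborel)"
    by (subst nn_integral_distr) auto
  also have "\<dots> = (\<integral>\<^sup>+z. indicator X z \<partial>lborel)"
    using assms by (intro nn_integral_lborel_shear) auto
  also have "\<dots> = emeasure lborel X"
    by simp
  finally show "emeasure (distr lborel borel (\<lambda>z. z - c z *\<^sub>R axis k 1)) X = emeasure lborel X" .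
qed simp

definition residuals_on :: "('n::finite \<Rightarrow> real^'n \<Rightarrow> real) \<Rightarrow> 'n set \<Rightarrow> real^'n \<Rightarrow> real^'n" where
  "residuals_on f A z = (\<chi> j. if j \<in> A then z $ j - f j z else z $ j)"

lemma continuous_on_residuals_on:
  assumes "\<And>k. continuous_on UNIV (f k)"
  shows "continuous_on UNIV (residuals_on f A)"
  unfolding residuals_on_def
proof (intro continuous_on_vec_lambda)
  fix j
  show "continuous_on UNIV (\<lambda>z. if j \<in> A then z $ j - f j z else z $ j)"
    by (cases "j \<in> A") (auto intro!: continuous_intros assms[THEN continuous_on_subset])
qed

lemma inj_residuals:
  fixes f :: "'n::finite \<Rightarrow> real^'n \<Rightarrow> real"
  assumes dep: "\<And>k. depends_only_on (f k) (pa k)" and dag: "is_dag pa"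
  shows "inj (residuals_on f UNIV)"
proof (rule injI)
  fix z z' :: "real^'n"
  assume eq: "residuals_on f UNIV z = residuals_on f UNIV z'"
  have "wf (edges pa)"
    using dag unfolding is_dag_def by (intro finite_acyclic_wf) simp_all
  then have "z $ k = z' $ k" for k
  proof (induction k rule: wf_induct_rule)
    case (less k)
    then have "f k z = f k z'"
      using dep[of k] unfolding depends_only_on_def edges_def by blast
    moreover have "z $ k - f k z = z' $ k - f k z'"
      using eq by (simp add: residuals_on_def vec_eq_iff)
    ultimately show ?case
      by simp
  qed
  then show "z = z'"
    by (simp add: vec_eq_iff)
qed

context
  fixes f :: "'n::finite \<Rightarrow> real^'n \<Rightarrow> real" and pa :: "'n \<Rightarrow> 'n set"
  assumes dep: "\<And>k. depends_only_on (f k) (pa k)"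
    and f_continuous: "\<And>k. continuous_on UNIV (f k)"
    and dag: "is_dag pa"
begin

private lemma f_measurable [measurable]: "f k \<in> borel_measurable borel"
  by (rule borel_measurable_continuous_onI[OF f_continuous])

private lemma residuals_on_measurable [measurable]: "residuals_on f A \<in> borel_measurable borel"
  by (rule borel_measurable_continuous_onI[OF continuous_on_residuals_on[OF f_continuous]])

lemma distr_lborel_residuals_on:
  assumes "\<And>j. j \<in> A \<Longrightarrow> pa j \<subseteq> A"
  shows "distr lborel borel (residuals_on f A) = lborel"
  using assms
proof (induction "card A" arbitrary: A rule: less_induct)
  case less
  show ?case
  proof (cases "A = {}")
    case True
    then have "residuals_on f A = (\<lambda>z. z)"
      by (auto simp: residuals_on_def vec_eq_iff)
    then show ?thesis
      by (simp add: distr_id2)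
  next
    case False
    \<comment> \<open>Peel off a node k of A without children in A: the map factors through a shear along
      axis k, which preserves Lebesgue measure because f k does not depend on z k.\<close>
    then obtain k where k: "k \<in> A" and childless: "\<And>m. k \<in> pa m \<Longrightarrow> m \<notin> A"
      using is_dag_obtain_sink[OF dag] by blast
    define A' where "A' = A - {k}"
    have "card A' < card A"
      using k unfolding A'_def by (intro card_Diff1_less) auto
    moreover have "\<And>j. j \<in> A' \<Longrightarrow> pa j \<subseteq> A'"
      using less.prems childless unfolding A'_def by blast
    ultimately have IH: "distr lborel borel (residuals_on f A') = lborel"
      by (rule less.hyps)
    have "f k (z + t *\<^sub>R axis k 1) = f k z" for z t
      by (rule depends_only_on_add[OF dep]) (use is_dag_irreflexive[OF dag] in \<open>auto simp: axis_def\<close>)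
    then have shear: "distr lborel borel (\<lambda>z. z - f k z *\<^sub>R axis k 1) = lborel"
      by (intro distr_lborel_shear) auto
    have factor: "residuals_on f A = residuals_on f A' \<circ> (\<lambda>z. z - f k z *\<^sub>R axis k 1)"
    proof
      fix z :: "real^'n"
      have "f j (z + - (f k z *\<^sub>R axis k 1)) = f j z" if "j \<in> A'" for j
        using that childless unfolding A'_def by (intro depends_only_on_add[OF dep]) (auto simp: axis_def)
      then show "residuals_on f A z = (residuals_on f A' \<circ> (\<lambda>z. z - f k z *\<^sub>R axis k 1)) z"
        using k by (auto simp: residuals_on_def vec_eq_iff axis_def A'_def)
    qed
    have "distr lborel borel (residuals_on f A) =
        distr (distr lborel borel (\<lambda>z. z - f k z *\<^sub>R axis k 1)) borel (residuals_on f A')"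
      unfolding factor by (subst distr_distr) auto
    then show ?thesis
      by (simp add: shear IH)
  qed
qed

end

section \<open>Densities and variances\<close>

lemma (in product_sigma_finite) PiM_density:
  assumes [measurable]: "\<And>i. \<phi> i \<in> borel_measurable (M i)"
    and "product_sigma_finite (\<lambda>i. density (M i) (\<phi> i))"
    and "finite I"
  shows "density (PiM I M) (\<lambda>x. \<Prod>i\<in>I. \<phi> i (x i)) = PiM I (\<lambda>i. density (M i) (\<phi> i))"
proof (rule product_sigma_finite.PiM_eqI[OF assms(2,3)])
  fix B
  assume "\<And>i. i \<in> I \<Longrightarrow> B i \<in> sets (density (M i) (\<phi> i))"
  then have B [measurable]: "\<And>i. i \<in> I \<Longrightarrow> B i \<in> sets (M i)"
    by simp
  have "emeasure (density (PiM I M) (\<lambda>x. \<Prod>i\<in>I. \<phi> i (x i))) (PiE I B) =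
      (\<integral>\<^sup>+x. (\<Prod>i\<in>I. \<phi> i (x i)) * indicator (PiE I B) x \<partial>PiM I M)"
    using assms(3) by (subst emeasure_density) (auto intro!: sets_PiM_I_finite)
  also have "\<dots> = (\<integral>\<^sup>+x. (\<Prod>i\<in>I. \<phi> i (x i) * indicator (B i) (x i)) \<partial>PiM I M)"
    using assms(3) by (intro nn_integral_cong) (auto simp: prod.distrib indicator_def PiE_def space_PiM prod_zero_iff Pi_iff)
  also have "\<dots> = (\<Prod>i\<in>I. \<integral>\<^sup>+y. \<phi> i y * indicator (B i) y \<partial>M i)"
    using assms(3) by (intro product_nn_integral_prod) auto
  also have "\<dots> = (\<Prod>i\<in>I. emeasure (density (M i) (\<phi> i)) (B i))"
    by (intro prod.cong refl) (simp add: emeasure_density)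
  finally show "emeasure (density (PiM I M) (\<lambda>x. \<Prod>i\<in>I. \<phi> i (x i))) (PiE I B) =
      (\<Prod>i\<in>I. emeasure (density (M i) (\<phi> i)) (B i))" .
qed (auto intro!: sets_PiM_cong)

lemma (in prob_space) distributed_indep_vars_vec:
  fixes E :: "'n::finite \<Rightarrow> 'a \<Rightarrow> real"
  assumes indep: "indep_vars (\<lambda>_. borel) E UNIV"
    and dist: "\<And>k. distributed M lborel (E k) (\<phi> k)"
  shows "distributed M lborel (\<lambda>\<omega>. \<chi> k. E k \<omega>) (\<lambda>z. \<Prod>k\<in>UNIV. \<phi> k (z $ k))"
proof -
  interpret product_sigma_finite "\<lambda>_::'n. lborel :: real measure"
    by (rule product_sigma_finite_lborel)
  have [measurable]: "E k \<in> borel_measurable M" "\<phi> k \<in> borel_measurable borel" for k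
    using distributed_measurable[OF dist[of k]] distributed_borel_measurable[OF dist[of k]] by simp_all
  have law: "distr M lborel (E k) = density lborel (\<phi> k)" for k
    by (rule distributed_distr_eq_density[OF dist])
  have "product_sigma_finite (\<lambda>k. density lborel (\<phi> k))"
    unfolding product_sigma_finite_def law[symmetric]
    by (auto intro!: prob_space_imp_sigma_finite prob_space_distr)
  then have joint: "distr M (PiM UNIV (\<lambda>_. lborel)) (\<lambda>\<omega>. \<lambda>k\<in>UNIV. E k \<omega>) =
      density (PiM UNIV (\<lambda>_. lborel)) (\<lambda>x. \<Prod>k\<in>UNIV. \<phi> k (x k))"
    using indep unfolding indep_vars_def
    by (subst PiM_density) (auto simp: law[symmetric] indep_vars_iff_distr_eq_PiM[symmetric] indep_vars_def)
  have Evec: "(\<lambda>\<omega>. \<lambda>k\<in>UNIV. E k \<omega>) \<in> measurable M (PiM UNIV (\<lambda>_. lborel))"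
    by measurable
  then have "distr M lborel (\<lambda>\<omega>. \<chi> k. E k \<omega>) =
      distr (distr M (PiM UNIV (\<lambda>_. lborel)) (\<lambda>\<omega>. \<lambda>k\<in>UNIV. E k \<omega>)) lborel vec_lambda"
    using measurable_vec_lambda_PiM by (subst distr_distr) (auto simp: comp_def restrict_def)
  also have "\<dots> = distr (density (PiM UNIV (\<lambda>_. lborel)) (\<lambda>x. \<Prod>k\<in>UNIV. \<phi> k (x k))) lborel vec_lambda"
    unfolding joint ..
  also have "\<dots> = density lborel (\<lambda>z. \<Prod>k\<in>UNIV. \<phi> k (z $ k))"
    by (subst lborel_real_vec_eq_PiM, subst density_distr) (auto intro!: distr_cong)
  finally have "distr M lborel (\<lambda>\<omega>. \<chi> k. E k \<omega>) = density lborel (\<lambda>z. \<Prod>k\<in>UNIV. \<phi> k (z $ k))" .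
  moreover have "(\<lambda>\<omega>. \<chi> k. E k \<omega>) \<in> borel_measurable M"
    using measurable_compose[OF Evec measurable_vec_lambda_PiM] by (simp add: restrict_def)
  ultimately show ?thesis
    unfolding distributed_def by auto
qed

lemma nn_integral_cbox_continuous:
  fixes g :: "'a::euclidean_space \<Rightarrow> real"
  assumes "continuous_on UNIV g" and "\<And>z. 0 \<le> g z"
  shows "(\<integral>\<^sup>+z. ennreal (g z) * indicator (cbox a b) z \<partial>lborel) = ennreal (integral (cbox a b) g)"
proof -
  have "g integrable_on cbox a b"
    by (rule integrable_continuous) (rule continuous_on_subset[OF assms(1)], simp)
  then have "(g has_integral integral (cbox a b) g) (cbox a b)"
    by (simp add: has_integral_integral)
  then have "(\<integral>\<^sup>+z. ennreal (indicator (cbox a b) z * g z) \<partial>lborel) = ennreal (integral (cbox a b) g)"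
    by (rule nn_integral_has_integral_lebesgue[rotated]) (simp add: assms(2))
  moreover have "(\<lambda>z. ennreal (indicator (cbox a b) z * g z)) = (\<lambda>z. ennreal (g z) * indicator (cbox a b) z)"
    by (auto simp: indicator_def)
  ultimately show ?thesis
    by simp
qed

lemma continuous_nonpos_if_has_integral_0_cbox:
  fixes s :: "'a::euclidean_space \<Rightarrow> real"
  assumes "continuous_on UNIV s" and "\<And>a b. (s has_integral 0) (cbox a b)"
  shows "s z \<le> 0"
proof (rule ccontr)
  assume "\<not> s z \<le> 0"
  have "open {y. 0 < s y}"
    by (rule open_Collect_less[where f = "\<lambda>_. 0", simplified]) (use assms(1) in simp)
  moreover have "z \<in> {y. 0 < s y}"
    using \<open>\<not> s z \<le> 0\<close> by simp
  ultimately obtain a b where ab: "cbox a b \<subseteq> {y. 0 < s y}" "z \<in> box a b"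
    by (rule open_contains_cbox)
  have "s z = 0"
  proof (rule has_integral_0_cbox_imp_0[of a b s])
    show "continuous_on (cbox a b) s"
      by (rule continuous_on_subset[OF assms(1)]) simp
    show "\<And>x. x \<in> box a b \<Longrightarrow> 0 \<le> s x"
      using ab box_subset_cbox by (metis less_imp_le mem_Collect_eq subsetD)
    show "(s has_integral 0) (cbox a b)"
      by (rule assms(2))
    show "box a b \<noteq> {}" "z \<in> cbox a b"
      using ab box_subset_cbox by auto
  qed
  with \<open>\<not> s z \<le> 0\<close> show False
    by simp
qed

lemma continuous_density_eq_if_cbox:
  fixes p q :: "'a::euclidean_space \<Rightarrow> real"
  assumes p: "continuous_on UNIV p" and q: "continuous_on UNIV q" and q_pos: "\<And>z. 0 < q z"
    and eq: "\<And>a b. (\<integral>\<^sup>+z. ennreal (p z) * indicator (cbox a b) z \<partial>lborel) =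
                    (\<integral>\<^sup>+z. ennreal (q z) * indicator (cbox a b) z \<partial>lborel)"
  shows "p z = q z"
proof -
  define g where "g z = max (p z) 0" for z
  have g: "continuous_on UNIV g"
    unfolding g_def by (intro continuous_intros p)
  have q_nonneg: "0 \<le> q z" for z
    using q_pos[of z] by simp
  have integrable: "g integrable_on cbox a b" "q integrable_on cbox a b" for a b
    using g q by (auto intro!: integrable_continuous intro: continuous_on_subset)
  have "ennreal (integral (cbox a b) g) = ennreal (integral (cbox a b) q)" for a b
    using eq[of a b] nn_integral_cbox_continuous[OF g] nn_integral_cbox_continuous[OF q q_nonneg]
    by (simp add: g_def ennreal_max_0')
  moreover have "0 \<le> integral (cbox a b) g" "0 \<le> integral (cbox a b) q" for a b
    using integrable by (auto intro!: integral_nonneg q_nonneg simp: g_def)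
  ultimately have "integral (cbox a b) g = integral (cbox a b) q" for a b
    by simp
  then have zero: "((\<lambda>z. g z - q z) has_integral 0) (cbox a b)" for a b
    using has_integral_diff[OF integrable(1)[THEN integrable_integral] integrable(2)[THEN integrable_integral]]
    by simp
  have "g z - q z \<le> 0"
    by (rule continuous_nonpos_if_has_integral_0_cbox) (intro continuous_intros g q, rule zero)
  moreover have "- (g z - q z) \<le> 0"
    by (rule continuous_nonpos_if_has_integral_0_cbox) (intro continuous_intros g q, use has_integral_neg[OF zero] in simp)
  ultimately show ?thesis
    using q_pos[of z] unfolding g_def by (auto simp: max_def split: if_splits)
qed

lemma continuous_density_pullback:
  fixes T :: "'b::euclidean_space \<Rightarrow> 'b"
  assumes Z: "distributed M lborel Z (\<lambda>z. ennreal (p z))" and p: "continuous_on UNIV p"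
    and X: "distributed M lborel X (\<lambda>e. ennreal (\<psi> e))" and \<psi>: "continuous_on UNIV \<psi>"
    and \<psi>_pos: "\<And>e. 0 < \<psi> e"
    and X_eq: "\<And>\<omega>. \<omega> \<in> space M \<Longrightarrow> X \<omega> = T (Z \<omega>)"
    and T: "inj T" "continuous_on UNIV T" "distr lborel borel T = lborel"
  shows "p z = \<psi> (T z)"
  \<comment> \<open>T need not be onto: the image of a box under the continuous injection T is compact, hence
    Borel, and this suffices to compare the two densities on boxes.\<close>
proof (rule continuous_density_eq_if_cbox[OF p])
  show \<psi>T: "continuous_on UNIV (\<lambda>z. \<psi> (T z))"
    using \<psi> T(2) by (rule continuous_on_compose2) auto
  show "0 < \<psi> (T z)" for z
    by (rule \<psi>_pos)
  fix a b :: 'b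
  let ?C = "cbox a b"
  have [measurable]: "T \<in> borel_measurable borel" "\<psi> \<in> borel_measurable borel"
    using T(2) \<psi> by (auto intro: borel_measurable_continuous_onI)
  have "compact (T ` ?C)"
    by (rule compact_continuous_image[OF continuous_on_subset[OF T(2)]]) auto
  then have [measurable]: "T ` ?C \<in> sets borel"
    by (intro borel_closed compact_imp_closed)
  have "(\<integral>\<^sup>+z. ennreal (p z) * indicator ?C z \<partial>lborel) = emeasure M (Z -` ?C \<inter> space M)"
    using distributed_emeasure[OF Z, of ?C] by simp
  also have "Z -` ?C \<inter> space M = X -` (T ` ?C) \<inter> space M"
    using X_eq T(1) by (auto simp: inj_image_mem_iff dest: injD)
  also have "emeasure M \<dots> = (\<integral>\<^sup>+e. ennreal (\<psi> e) * indicator (T ` ?C) e \<partial>distr lborel borel T)"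
    using distributed_emeasure[OF X, of "T ` ?C"] by (simp add: T(3))
  also have "\<dots> = (\<integral>\<^sup>+z. ennreal (\<psi> (T z)) * indicator (T ` ?C) (T z) \<partial>lborel)"
    by (intro nn_integral_distr) auto
  also have "\<dots> = (\<integral>\<^sup>+z. ennreal (\<psi> (T z)) * indicator ?C z \<partial>lborel)"
    using T(1) by (simp add: indicator_def inj_image_mem_iff)
  finally show "(\<integral>\<^sup>+z. ennreal (p z) * indicator ?C z \<partial>lborel) =
      (\<integral>\<^sup>+z. ennreal (\<psi> (T z)) * indicator ?C z \<partial>lborel)" .
qed

lemma structural_equation_density:
  fixes f :: "'n::finite \<Rightarrow> real^'n \<Rightarrow> real" and \<phi> :: "'n \<Rightarrow> real \<Rightarrow> real"
  assumes "prob_space M"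
    and dag: "is_dag pa"
    and dep: "\<And>k. depends_only_on (f k) (pa k)"
    and f_continuous: "\<And>k. continuous_on UNIV (f k)"
    and indep: "prob_space.indep_vars M (\<lambda>_. borel) E UNIV"
    and noise: "\<And>k. distributed M lborel (E k) (\<lambda>x. ennreal (\<phi> k x))"
    and \<phi>: "\<And>k. continuous_on UNIV (\<phi> k)" "\<And>k x. 0 < \<phi> k x"
    and sem: "\<And>\<omega> k. \<omega> \<in> space M \<Longrightarrow> Z \<omega> $ k = f k (Z \<omega>) + E k \<omega>"
    and Z: "distributed M lborel Z (\<lambda>z. ennreal (p z))" and p: "continuous_on UNIV p"
  shows "p z = (\<Prod>k\<in>UNIV. \<phi> k (z $ k - f k z))"
proof -
  interpret prob_space M
    by fact
  have "distributed M lborel (\<lambda>\<omega>. \<chi> k. E k \<omega>) (\<lambda>e. ennreal (\<Prod>k\<in>UNIV. \<phi> k (e $ k)))"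
    using distributed_indep_vars_vec[OF indep noise] \<phi>(2) by (simp add: prod_ennreal less_imp_le)
  moreover have "continuous_on UNIV (\<lambda>e. \<Prod>k\<in>UNIV. \<phi> k (e $ k))"
    using \<phi>(1) by (intro continuous_intros continuous_on_compose2[OF \<phi>(1)]) auto
  moreover have "(\<chi> k. E k \<omega>) = residuals_on f UNIV (Z \<omega>)" if "\<omega> \<in> space M" for \<omega>
    using sem[OF that] by (simp add: residuals_on_def vec_eq_iff)
  ultimately have "p z = (\<Prod>k\<in>UNIV. \<phi> k (residuals_on f UNIV z $ k))"
    using Z p \<phi>(2) inj_residuals[OF dep dag] continuous_on_residuals_on[OF f_continuous]
      distr_lborel_residuals_on[OF dep f_continuous dag]
    by (intro continuous_density_pullback[where X = "\<lambda>\<omega>. \<chi> k. E k \<omega>"]) (auto intro: prod_pos)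
  then show ?thesis
    by (simp add: residuals_on_def)
qed

lemma (in prob_space) AE_eq_expectation_if_zero_variance:
  fixes X :: "'a \<Rightarrow> real"
  assumes [measurable]: "X \<in> borel_measurable M" and "zero_variance M X"
  shows "AE \<omega> in M. X \<omega> = expectation X"
proof -
  define c where "c = expectation X"
  have sq: "integrable M (\<lambda>\<omega>. (X \<omega>)\<^sup>2)" and var: "variance X = 0"
    using assms(2) unfolding zero_variance_def by auto
  have "integrable M X"
    by (rule square_integrable_imp_integrable[OF _ sq]) measurable
  then have "integrable M (\<lambda>\<omega>. (X \<omega>)\<^sup>2 - 2 * c * X \<omega> + c\<^sup>2)"
    using sq by auto
  moreover have "(\<lambda>\<omega>. (X \<omega>)\<^sup>2 - 2 * c * X \<omega> + c\<^sup>2) = (\<lambda>\<omega>. (X \<omega> - c)\<^sup>2)"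
    by (auto simp: power2_diff mult_ac)
  ultimately have "integrable M (\<lambda>\<omega>. (X \<omega> - c)\<^sup>2)"
    by simp
  then have "AE \<omega> in M. (X \<omega> - c)\<^sup>2 = 0"
    using var unfolding c_def by (subst integral_nonneg_eq_0_iff_AE[symmetric]) auto
  then show ?thesis
    unfolding c_def by simp
qed

lemma distributed_AE_closed_imp_mem:
  fixes Z :: "'a \<Rightarrow> 'b::euclidean_space"
  assumes Z: "distributed M lborel Z (\<lambda>z. ennreal (q z))" and q_pos: "\<And>z. 0 < q z"
    and S: "closed S" and AE: "AE \<omega> in M. Z \<omega> \<in> S"
  shows "z \<in> S"
proof -
  have [measurable]: "S \<in> sets borel"
    using S by (rule borel_closed)
  have "AE z in density lborel (\<lambda>z. ennreal (q z)). z \<in> S"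
    using AE distributed_measurable[OF Z] distributed_borel_measurable[OF Z]
    by (subst distributed_distr_eq_density[OF Z, symmetric], subst AE_distr_iff) auto
  then have "AE z in lborel. z \<in> S"
    using q_pos distributed_borel_measurable[OF Z] by (subst (asm) AE_density) auto
  then show ?thesis
    using S by (intro mem_closed_if_AE_lebesgue AE_completion)
qed

lemma (in prob_space) zero_variance_continuous_iff_constant:
  fixes Z :: "'a \<Rightarrow> 'b::euclidean_space" and h :: "'b \<Rightarrow> real"
  assumes Z: "distributed M lborel Z (\<lambda>z. ennreal (q z))" and q_pos: "\<And>z. 0 < q z"
    and h: "continuous_on UNIV h"
  shows "zero_variance M (\<lambda>\<omega>. h (Z \<omega>)) \<longleftrightarrow> (\<exists>c. \<forall>z. h z = c)"
proof
  have [measurable]: "Z \<in> borel_measurable M" "h \<in> borel_measurable borel"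
    using distributed_measurable[OF Z] h by (auto intro: borel_measurable_continuous_onI)
  assume "zero_variance M (\<lambda>\<omega>. h (Z \<omega>))"
  then have "AE \<omega> in M. h (Z \<omega>) = expectation (\<lambda>\<omega>. h (Z \<omega>))"
    by (intro AE_eq_expectation_if_zero_variance) measurable
  then have "AE \<omega> in M. Z \<omega> \<in> {z. h z = expectation (\<lambda>\<omega>. h (Z \<omega>))}"
    by simp
  moreover have "closed {z. h z = expectation (\<lambda>\<omega>. h (Z \<omega>))}"
    using h by (intro closed_Collect_eq continuous_on_const) auto
  ultimately show "\<exists>c. \<forall>z. h z = c"
    using distributed_AE_closed_imp_mem[OF Z q_pos] by blast
next
  assume "\<exists>c. \<forall>z. h z = c"
  then show "zero_variance M (\<lambda>\<omega>. h (Z \<omega>))"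
    by (auto simp: zero_variance_def prob_space)
qed

theorem lemma2:
  fixes M :: "'a measure"
    and pa :: "'n::finite \<Rightarrow> 'n set"
    and f :: "'n \<Rightarrow> real^'n \<Rightarrow> real"
    and \<sigma> :: "'n \<Rightarrow> real"
    and E :: "'n \<Rightarrow> 'a \<Rightarrow> real"
    and Z :: "'a \<Rightarrow> real^'n"
    and p :: "real^'n \<Rightarrow> real"
    and \<beta> :: "real^'n^'n"
    and i :: 'n
  assumes "prob_space M"
    and "is_dag pa"
    and "\<And>k. depends_only_on (f k) (pa k)"
    and "\<And>k. C2 (f k)"
    and "\<And>k. dir_nonlinear (f k) (pa k)"
    and "\<And>k. \<sigma> k > 0"
    and "prob_space.indep_vars M (\<lambda>_. borel) E UNIV"
    and "\<And>k. distributed M lborel (E k) (normal_density 0 (\<sigma> k))"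
    and "Z \<in> borel_measurable M"
    and "\<And>\<omega> k. \<omega> \<in> space M \<Longrightarrow> Z \<omega> $ k = f k (Z \<omega>) + E k \<omega>"
    and "distributed M lborel Z (\<lambda>z. ennreal (p z))"
    and "continuous_on UNIV p"
  shows "zero_variance M
           (\<lambda>\<omega>. (transpose \<beta> ** hessian (\<lambda>z. ln (p z)) (Z \<omega>) ** \<beta>) $ i $ i)
         \<longleftrightarrow> (\<forall>j. \<not> leaf pa j \<longrightarrow> \<beta> $ j $ i = 0)"
proof -
  let ?L = "gaussian_sem_log_density f \<sigma>" and ?b = "column i \<beta>"
  have f_continuous: "continuous_on UNIV (f k)" for k
    using C2_imp_continuous(1)[OF assms(4)] .
  have normal_continuous: "continuous_on UNIV (normal_density 0 (\<sigma> k))" for k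
    using assms(6)[of k] unfolding normal_density_def by (intro continuous_intros) auto
  have p_eq: "p = (\<lambda>z. \<Prod>k\<in>UNIV. normal_density 0 (\<sigma> k) (z $ k - f k z))"
    using structural_equation_density[OF assms(1-3) f_continuous assms(7,8) normal_continuous
        normal_density_pos[OF assms(6)] assms(10-12)] by blast
  then have "(\<lambda>z. ln (p z)) = ?L"
    by (simp add: fun_eq_iff gaussian_sem_log_density_def ln_prod normal_density_pos[OF assms(6)]
        less_imp_neq[symmetric])
  then have "(\<lambda>\<omega>. (transpose \<beta> ** hessian (\<lambda>z. ln (p z)) (Z \<omega>) ** \<beta>) $ i $ i) =
      (\<lambda>\<omega>. dir_deriv2 ?L ?b ?b (Z \<omega>))"
    by (simp add: hessian_congruence_diag gaussian_sem_log_density_differentiable[of f \<sigma>, OF assms(4,6)])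
  moreover have "zero_variance M (\<lambda>\<omega>. dir_deriv2 ?L ?b ?b (Z \<omega>)) \<longleftrightarrow>
      (\<exists>c. \<forall>z. dir_deriv2 ?L ?b ?b z = c)"
    using assms(11) continuous_on_dir_deriv2_gaussian_sem_log_density[of f \<sigma>, OF assms(4,6)]
    by (intro prob_space.zero_variance_continuous_iff_constant[OF assms(1)])
      (auto simp: p_eq normal_density_pos[OF assms(6)] intro: prod_pos)
  moreover have "(\<exists>c. \<forall>z. dir_deriv2 ?L ?b ?b z = c) \<longleftrightarrow> (\<forall>j. \<not> leaf pa j \<longrightarrow> ?b $ j = 0)"
    using gaussian_sem_log_density_constant_curvature_iff[of f pa \<sigma>, OF assms(3,4,2,6,5)] .
  ultimately show ?thesis
    by (simp add: column_def)
qed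

end
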